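(* Let $\mathbf p$ be a Nash-routing of a max game on a graph with $n\ge2$ nodes, with $C=C(\mathbf p)$ and $D=D(\mathbf p)$, and let $\mathbf p^*$ be an optimal routing. Let $Z$ be the set of all edges $e$ with $C_e(\mathbf p)\ge C-2\lg n$. If $C\ge D+2\lg n+2$, then there is a nonempty set of edges $X\subseteq Z$ such that $|f(X)|\le 2|X|$.
   Context: A routing game $(\mathbf N,G,\mathcal P)$: players $\{1,\dots,N\}$ ($N\ge1$), a simple graph $G=(V,E)$ with $n=|V|$ nodes (so fewer than $n^2$ edges), and for each player $i$ a nonempty finite set $\mathcal P_i$ of paths from $u_i$ to $v_i$. A routing is $\mathbf p=[p_1,\dots,p_N]$, $p_i\in\mathcal P_i$. $C_e(\mathbf p)$ = number of players whose path uses edge $e$; $C_i(\mathbf p)=\max_{e\in p_i}C_e(\mathbf p)$; $D_i(\mathbf p)=|p_i|$; $C(\mathbf p)=\max_eC_e(\mathbf p)$; $D(\mathbf p)=\max_i|p_i|$. Max game: $pc_i=\max(C_i,D_i)$, $SC=\max(C,D)$. A Nash-routing is one where no player can strictly lower $pc_i$ by unilaterally changing its path within $\mathcal P_i$; an optimal routing $\mathbf p^*=[p_1^*,\dots,p_N^*]$ minimizes $SC$. $\lg=\log_2$. $\Pi_e(\mathbf p)$ is the set of players $i$ with $e\in p_i$. $H$ is the set of edges $e$ with $C_e(\mathbf p)\ge D+2$. For $e\in H$ and $i\in\Pi_e(\mathbf p)$, $f(e,i)=\{e'\in p_i^*: C_{e'}(\mathbf p)\ge C_e(\mathbf p)-1\}$;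 $f(e)=\bigcup_{i\in\Pi_e(\mathbf p)}f(e,i)$; for $X\subseteq H$, $f(X)=\bigcup_{e\in X}f(e)$. *)

theory Defs
  imports Main "HOL-Library.Log_Nat" Complex_Main
begin

definition simple_graph :: "'v set \<Rightarrow> 'v set set \<Rightarrow> bool" where
  "simple_graph V E \<longleftrightarrow> finite V \<and> (\<forall>e\<in>E. \<exists>a b. a \<noteq> b \<and> a \<in> V \<and> b \<in> V \<and> e = {a, b})"

definition path_edges :: "'v list \<Rightarrow> 'v set set" where
  "path_edges p = {{p ! k, p ! Suc k} | k. Suc k < length p}"

definition is_path :: "'v set \<Rightarrow> 'v set set \<Rightarrow> 'v \<Rightarrow> 'v \<Rightarrow> 'v list \<Rightarrow> bool" where
  "is_path V E u v p \<longleftrightarrow> p \<noteq> [] \<and> hd p = u \<and> last p = v \<and> distinct p \<and> set p \<subseteq> V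
     \<and> path_edges p \<subseteq> E"

definition routing_game :: "'v set \<Rightarrow> 'v set set \<Rightarrow> nat \<Rightarrow> (nat \<Rightarrow> 'v) \<Rightarrow> (nat \<Rightarrow> 'v)
     \<Rightarrow> (nat \<Rightarrow> 'v list set) \<Rightarrow> bool" where
  "routing_game V E N u v P \<longleftrightarrow> simple_graph V E \<and> N \<ge> 1 \<and>
     (\<forall>i\<in>{1..N}. finite (P i) \<and> P i \<noteq> {} \<and> (\<forall>p\<in>P i. is_path V E (u i) (v i) p))"

definition routing :: "nat \<Rightarrow> (nat \<Rightarrow> 'v list set) \<Rightarrow> (nat \<Rightarrow> 'v list) \<Rightarrow> bool" where
  "routing N P r \<longleftrightarrow> (\<forall>i\<in>{1..N}. r i \<in> P i)"

definition users :: "nat \<Rightarrow> (nat \<Rightarrow> 'v list) \<Rightarrow> 'v set \<Rightarrow> nat set" where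
  "users N r e = {i \<in> {1..N}. e \<in> path_edges (r i)}"

definition edge_cong :: "nat \<Rightarrow> (nat \<Rightarrow> 'v list) \<Rightarrow> 'v set \<Rightarrow> nat" where
  "edge_cong N r e = card (users N r e)"

definition player_cong :: "nat \<Rightarrow> (nat \<Rightarrow> 'v list) \<Rightarrow> nat \<Rightarrow> nat" where
  "player_cong N r i = Max (insert 0 (edge_cong N r ` path_edges (r i)))"

definition player_len :: "(nat \<Rightarrow> 'v list) \<Rightarrow> nat \<Rightarrow> nat" where
  "player_len r i = card (path_edges (r i))"

definition player_cost :: "nat \<Rightarrow> (nat \<Rightarrow> 'v list) \<Rightarrow> nat \<Rightarrow> nat" where
  "player_cost N r i = max (player_cong N r i) (player_len r i)"

definition congestion :: "'v set set \<Rightarrow> nat \<Rightarrow> (nat \<Rightarrow> 'v list) \<Rightarrow> nat" where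
  "congestion E N r = Max (insert 0 (edge_cong N r ` E))"

definition dilation :: "nat \<Rightarrow> (nat \<Rightarrow> 'v list) \<Rightarrow> nat" where
  "dilation N r = Max (insert 0 (player_len r ` {1..N}))"

definition social_cost :: "'v set set \<Rightarrow> nat \<Rightarrow> (nat \<Rightarrow> 'v list) \<Rightarrow> nat" where
  "social_cost E N r = max (congestion E N r) (dilation N r)"

definition nash_routing :: "nat \<Rightarrow> (nat \<Rightarrow> 'v list set) \<Rightarrow> (nat \<Rightarrow> 'v list) \<Rightarrow> bool" where
  "nash_routing N P r \<longleftrightarrow> routing N P r \<and>
     (\<forall>i\<in>{1..N}. \<forall>q\<in>P i. player_cost N r i \<le> player_cost N (r(i := q)) i)"

definition optimal_routing :: "'v set set \<Rightarrow> nat \<Rightarrow> (nat \<Rightarrow> 'v list set) \<Rightarrow> (nat \<Rightarrow> 'v list) \<Rightarrow> bool" where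
  "optimal_routing E N P r \<longleftrightarrow> routing N P r \<and>
     (\<forall>r'. routing N P r' \<longrightarrow> social_cost E N r \<le> social_cost E N r')"

definition f_ei :: "nat \<Rightarrow> (nat \<Rightarrow> 'v list) \<Rightarrow> (nat \<Rightarrow> 'v list) \<Rightarrow> 'v set \<Rightarrow> nat \<Rightarrow> 'v set set" where
  "f_ei N r ropt e i = {e' \<in> path_edges (ropt i). edge_cong N r e' \<ge> edge_cong N r e - 1}"

definition f_e :: "nat \<Rightarrow> (nat \<Rightarrow> 'v list) \<Rightarrow> (nat \<Rightarrow> 'v list) \<Rightarrow> 'v set \<Rightarrow> 'v set set" where
  "f_e N r ropt e = (\<Union>i\<in>users N r e. f_ei N r ropt e i)"

definition f_set :: "nat \<Rightarrow> (nat \<Rightarrow> 'v list) \<Rightarrow> (nat \<Rightarrow> 'v list) \<Rightarrow> 'v set set \<Rightarrow> 'v set set" where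
  "f_set N r ropt X = (\<Union>e\<in>X. f_e N r ropt e)"

definition heavy :: "'v set set \<Rightarrow> nat \<Rightarrow> (nat \<Rightarrow> 'v list) \<Rightarrow> 'v set set" where
  "heavy E N r = {e \<in> E. edge_cong N r e \<ge> dilation N r + 2}"

end

theory Submission
  imports Defs
begin

(* Write C for the congestion of the Nash-routing r and
   let layer j be the set of edges whose congestion is at least C - j.  By definition of
   f, every edge of f(e) has congestion at least C_e - 1 and lies on an optimal path,
   so f maps layer j into layer (j+1).  Layer 0 contains a maximally congested edge.
   If the theorem failed, every nonempty layer j with j <= k = floor(2 lg n) (all of
   them lie inside Z) would satisfy |f(layer j)| > 2 |layer j|, so by induction layer
   (k+1) would contain at least 2^(k+1) > n^2 edges, exceeding the number of edges of a
   simple graph on n nodes. *)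

lemma simple_graph_edges_bound:
  assumes "simple_graph V E"
  shows "finite E" and "card E \<le> card V ^ 2"
proof -
  have finV: "finite V" using assms unfolding simple_graph_def by auto
  have sub: "E \<subseteq> (\<lambda>(a, b). {a, b}) ` (V \<times> V)"
    using assms unfolding simple_graph_def by fastforce
  have fin_pairs: "finite ((\<lambda>(a, b). {a, b}) ` (V \<times> V))" using finV by simp
  then show "finite E" using sub by (rule finite_subset[rotated])
  have "card E \<le> card ((\<lambda>(a, b). {a, b}) ` (V \<times> V))" using card_mono[OF fin_pairs sub] .
  also have "\<dots> \<le> card (V \<times> V)" by (rule card_image_le) (use finV in simp)
  finally show "card E \<le> card V ^ 2" by (simp add: card_cartesian_product power2_eq_square)
qed

definition layer :: "'v set set \<Rightarrow> nat \<Rightarrow> (nat \<Rightarrow> 'v list) \<Rightarrow> nat \<Rightarrow> 'v set set" where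
  "layer E N r j = {e \<in> E. congestion E N r \<le> edge_cong N r e + j}"

lemma f_set_layer_subset:
  assumes opt_edges: "\<And>i. i \<in> {1..N} \<Longrightarrow> path_edges (ropt i) \<subseteq> E"
  shows "f_set N r ropt (layer E N r j) \<subseteq> layer E N r (Suc j)"
proof
  fix e' assume "e' \<in> f_set N r ropt (layer E N r j)"
  then obtain e i where e: "e \<in> layer E N r j" and i: "i \<in> users N r e"
    and e'_opt: "e' \<in> path_edges (ropt i)" and e'_cong: "edge_cong N r e - 1 \<le> edge_cong N r e'"
    unfolding f_set_def f_e_def f_ei_def by auto
  have "i \<in> {1..N}" using i unfolding users_def by auto
  then have "e' \<in> E" using opt_edges e'_opt by blast
  moreover have "congestion E N r \<le> edge_cong N r e' + Suc j"
    using e e'_cong unfolding layer_def by auto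
  ultimately show "e' \<in> layer E N r (Suc j)" unfolding layer_def by simp
qed

lemma layer_0_nonempty:
  assumes "finite E" and "congestion E N r > 0"
  shows "layer E N r 0 \<noteq> {}"
proof -
  have "congestion E N r \<in> insert 0 (edge_cong N r ` E)"
    unfolding congestion_def using assms(1) by (intro Max_in) auto
  then obtain e where "e \<in> E" "edge_cong N r e = congestion E N r" using assms(2) by auto
  then show ?thesis unfolding layer_def by auto
qed

lemma doubling_chain:
  fixes Z :: "nat \<Rightarrow> 'a set" and F :: "'a set \<Rightarrow> 'a set"
  assumes fin: "\<And>j. finite (Z j)" and start: "Z 0 \<noteq> {}"
    and step: "\<And>j. F (Z j) \<subseteq> Z (Suc j)"
    and expand: "\<And>j. j \<le> k \<Longrightarrow> Z j \<noteq> {} \<Longrightarrow> 2 * card (Z j) < card (F (Z j))"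
  shows "2 ^ Suc k \<le> card (Z (Suc k))"
proof -
  have "2 ^ j \<le> card (Z j)" if "j \<le> Suc k" for j
    using that
  proof (induction j)
    case 0
    then show ?case using start fin[of 0] by (simp add: Suc_le_eq card_gt_0_iff)
  next
    case (Suc j)
    then have IH: "2 ^ j \<le> card (Z j)" by simp
    then have "Z j \<noteq> {}" by (metis card.empty le_zero_eq power_not_zero zero_neq_numeral)
    then have "2 * card (Z j) < card (F (Z j))" using expand Suc.prems by simp
    also have "\<dots> \<le> card (Z (Suc j))" using card_mono[OF fin step] .
    finally show ?case using IH by simp
  qed
  from this[OF order_refl] show ?thesis .
qed

lemma square_less_pow2_floor_log:
  fixes x :: real
  assumes "x \<ge> 1"
  shows "x ^ 2 < 2 ^ Suc (nat \<lfloor>2 * log 2 x\<rfloor>)"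
proof -
  define L where "L = 2 * log 2 x"
  have "L \<ge> 0" using assms unfolding L_def by simp
  then have L_less: "L < real (Suc (nat \<lfloor>L\<rfloor>))" by linarith
  have "x ^ 2 = (2 powr log 2 x) powr 2" using assms by (simp add: powr_realpow)
  also have "\<dots> = 2 powr L" unfolding L_def by (simp add: powr_powr mult.commute)
  also have "\<dots> < 2 powr real (Suc (nat \<lfloor>L\<rfloor>))" using L_less by (intro powr_less_mono) auto
  also have "\<dots> = 2 ^ Suc (nat \<lfloor>L\<rfloor>)" by (rule powr_realpow) simp
  finally show ?thesis unfolding L_def .
qed

theorem mainTheorem4:
  fixes V :: "'v set" and E :: "'v set set" and N :: nat
    and u v :: "nat \<Rightarrow> 'v" and P :: "nat \<Rightarrow> 'v list set"
    and r ropt :: "nat \<Rightarrow> 'v list"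
  assumes game: "routing_game V E N u v P"
    and n2: "card V \<ge> 2"
    and nash: "nash_routing N P r"
    and opt: "optimal_routing E N P ropt"
    and big: "real (congestion E N r) \<ge> real (dilation N r) + 2 * log 2 (real (card V)) + 2"
  shows "\<exists>X. X \<noteq> {} \<and>
           X \<subseteq> {e \<in> E. real (edge_cong N r e) \<ge> real (congestion E N r) - 2 * log 2 (real (card V))} \<and>
           card (f_set N r ropt X) \<le> 2 * card X"
    (is "\<exists>X. X \<noteq> {} \<and> X \<subseteq> ?Z \<and> _")
proof (rule ccontr)
  assume no_X: "\<not> ?thesis"
  define k where "k = nat \<lfloor>2 * log 2 (real (card V))\<rfloor>"
  have graph: "simple_graph V E" using game unfolding routing_game_def by simp
  note finE = simple_graph_edges_bound(1)[OF graph]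
  have opt_edges: "path_edges (ropt i) \<subseteq> E" if "i \<in> {1..N}" for i
    using game opt that unfolding optimal_routing_def routing_def routing_game_def is_path_def
    by blast
  have lg: "log 2 (real (card V)) \<ge> 1" using n2 by simp
  then have "congestion E N r > 0" using big by linarith
  then have start: "layer E N r 0 \<noteq> {}" using layer_0_nonempty finE by blast
  have k_le: "real k \<le> 2 * log 2 (real (card V))" using lg unfolding k_def by linarith
  have "layer E N r j \<subseteq> ?Z" if "j \<le> k" for j
  proof
    fix e assume "e \<in> layer E N r j"
    then have "e \<in> E" "real (congestion E N r) \<le> real (edge_cong N r e) + real j"
      unfolding layer_def by auto
    then show "e \<in> ?Z" using that k_le by simp
  qed
  then have expand: "2 * card (layer E N r j) < card (f_set N r ropt (layer E N r j))"
    if "j \<le> k" "layer E N r j \<noteq> {}" for j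
    using no_X that by (meson not_le)
  have layer_E: "layer E N r j \<subseteq> E" for j unfolding layer_def by blast
  have "2 ^ Suc k \<le> card (layer E N r (Suc k))"
    by (rule doubling_chain[where F = "f_set N r ropt"])
      (use finite_subset[OF layer_E finE] start f_set_layer_subset[OF opt_edges] expand in auto)
  also have "\<dots> \<le> card E" using card_mono[OF finE layer_E] .
  also have "\<dots> \<le> card V ^ 2" using simple_graph_edges_bound(2)[OF graph] .
  finally have "real (2 ^ Suc k) \<le> real (card V ^ 2)" by (rule of_nat_mono)
  moreover have "real (card V ^ 2) < real (2 ^ Suc k)"
    unfolding of_nat_power of_nat_numeral k_def
    by (rule square_less_pow2_floor_log) (use n2 in simp)
  ultimately show False by (meson leD)
qed

end
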